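(* Let $n\ge 2$, let $\lambda_1\ge\dots\ge\lambda_n$ be real, let $w_1,\dots,w_n\ge 0$ with $\sum_i w_i=1$, and let $\mu_1\ge\dots\ge\mu_{n-1}$ be the roots of $p(x)=\sum_{i=1}^n w_i\prod_{j\ne i}(x-\lambda_j)$. Set $U_\ell:=\sum_{i=\ell}^n w_i$ and $L_{r+1}:=\sum_{i=1}^{r+1}w_i$. Then for all integers $1\le\ell\le r\le n-1$ with $U_\ell\ne0$ and $L_{r+1}\ne 0$, $$\sum_{j=\ell}^r\lambda_{j+1}+\sum_{j=\ell}^r w_{j+1}(\lambda_\ell-\lambda_{j+1})\le\sum_{j=\ell}^r\mu_j\le\sum_{j=\ell}^r\lambda_j-\sum_{j=\ell}^r w_j(\lambda_j-\lambda_{r+1}).$$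
   Context: Roots are counted with multiplicity and listed in non-increasing order. *)

theory Defs
  imports "HOL-Computational_Algebra.Polynomial"
begin

definition wpoly :: "nat \<Rightarrow> (nat \<Rightarrow> real) \<Rightarrow> (nat \<Rightarrow> real) \<Rightarrow> real poly" where
  "wpoly n lam w = (\<Sum>i=1..n. smult (w i) (\<Prod>j\<in>{1..n} - {i}. [:- lam j, 1:]))"

end

theory Submission
  imports Defs
begin

text \<open>
  Write p(x) = (\<Prod>j. x - \<lambda>_j) \<cdot> F(x) with F(x) = \<Sum>i. w_i / (x - \<lambda>_i). For t off the nodes, the
  number of roots of p above t is the number of nodes above t, less one if F(t) \<le> 0: p alternates
  in sign along the nodes and t, and its degree leaves no room for further roots. Zero weights and
  repeated nodes only split off linear factors, so they reduce to this generic case.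

  For the upper bound, drop the nodes 1, ..., l - 1 and move the weights of the nodes r + 1, ..., n
  onto the node r + 1. Between \<lambda>_(r+1) and \<lambda>_l this can only increase F, so by the counting formula
  the roots of the new polynomial G dominate \<mu>_l, ..., \<mu>_r in the sense of counting functions,
  hence in sum. By Vieta the roots of G sum to
  \<Sum>j=l..r. \<lambda>_j - (\<Sum>j=l..r. w_j (\<lambda>_j - \<lambda>_(r+1))) / U_l, and U_l \<le> 1.
  The lower bound is the upper bound for the reflected data -\<lambda>_(n+1-i), w_(n+1-i), -\<mu>_(n-j).
\<close>

section \<open>Counting functions of multisets\<close>

definition count_above :: "'a::linorder multiset \<Rightarrow> 'a \<Rightarrow> nat" where
  "count_above M t = size {#x \<in># M. t < x#}"

lemma sum_mset_le_if_count_above_le: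
  fixes M N :: "'a::{linorder, ordered_comm_monoid_add} multiset"
  assumes "size M = size N" and "\<And>t. count_above M t \<le> count_above N t"
  shows "sum_mset M \<le> sum_mset N"
  using assms
proof (induction "size M" arbitrary: M N)
  case 0
  then show ?case by simp
next
  case (Suc k)
  then have "M \<noteq> {#}" "N \<noteq> {#}" by auto
  define a where "a = Max (set_mset M)"
  define b where "b = Max (set_mset N)"
  have a: "a \<in># M" "\<forall>x\<in>#M. x \<le> a" using \<open>M \<noteq> {#}\<close> by (simp_all add: a_def)
  have b: "b \<in># N" "\<forall>x\<in>#N. x \<le> b" using \<open>N \<noteq> {#}\<close> by (simp_all add: b_def)
  have "count_above N b = 0"
    using b(2) by (auto simp: count_above_def)
  then have "count_above M b = 0" using Suc.prems(2) le_zero_eq by metis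
  then have ab: "a \<le> b"
    using a(1) by (auto simp: count_above_def not_less)
  obtain M' N' where M': "M = add_mset a M'" and N': "N = add_mset b N'"
    using a(1) b(1) by (metis insert_DiffM)
  have "count_above M' t \<le> count_above N' t" for t
  proof (cases "t < a")
    case True
    then have "t < b" using ab by (rule less_le_trans)
    then show ?thesis using Suc.prems(2)[of t] True by (simp add: M' N' count_above_def)
  next
    case False
    then have "{#x \<in># M'. t < x#} = {#}"
      using a(2) by (auto simp: M')
    then show ?thesis unfolding count_above_def by (metis le0 size_empty)
  qed
  moreover have "k = size M'" "size M' = size N'" using Suc M' N' by simp_all
  ultimately have "sum_mset M' \<le> sum_mset N'" using Suc.hyps(1) by blast
  then show ?case using ab by (simp add: M' N' add_mono)
qed

lemma exists_greater_same_side: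
  fixes F :: "'a::unbounded_dense_linorder set"
  assumes "finite F"
  obtains t' where "t < t'" and "\<forall>x\<in>F. t < x \<longleftrightarrow> t' < x"
proof (cases "{x\<in>F. t < x} = {}")
  case True
  obtain t' where "t < t'" using gt_ex by blast
  then show ?thesis using True by (intro that[of t']) auto
next
  case False
  define m where "m = Min {x\<in>F. t < x}"
  have "finite {x\<in>F. t < x}" using assms by simp
  then have "m \<in> {x\<in>F. t < x}" "\<forall>x\<in>F. t < x \<longrightarrow> m \<le> x"
    using False Min_in by (auto simp: m_def)
  moreover obtain t' where "t < t'" "t' < m" using \<open>m \<in> _\<close> dense by blast
  ultimately show ?thesis by (intro that[of t']) force+
qed

lemma count_above_le_if_le_off_finite:
  fixes M N :: "'a::unbounded_dense_linorder multiset"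
  assumes "finite F" and "\<And>t. t \<notin> F \<Longrightarrow> count_above M t \<le> count_above N t"
  shows "count_above M t \<le> count_above N t"
proof -
  obtain t' where "t < t'" and same: "\<forall>x\<in>F \<union> set_mset M \<union> set_mset N. t < x \<longleftrightarrow> t' < x"
    using exists_greater_same_side[of "F \<union> set_mset M \<union> set_mset N" t] assms(1) by auto
  then have "t' \<notin> F" by auto
  moreover have "count_above K t = count_above K t'" if "set_mset K \<subseteq> set_mset M \<union> set_mset N" for K
    unfolding count_above_def using same that by (intro arg_cong[where f=size] filter_mset_cong) auto
  ultimately show ?thesis using assms(2)[of t'] by simp
qed

lemma size_eq_count_above_below:
  fixes M :: "'a::linorder multiset"
  shows "size M = count_above M t + size {#x \<in># M. x < t#} + count M t"
proof -
  have "M = {#x \<in># M. t < x#} + {#x \<in># M. x < t#} + {#x \<in># M. x = t#}"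
    by (rule multiset_eqI) auto
  then show ?thesis
    unfolding count_above_def by (metis filter_eq_replicate_mset size_replicate_mset size_union)
qed

section \<open>Products of linear factors\<close>

lemma prod_mset_linear_coeffs:
  fixes M :: "'a::comm_ring_1 multiset"
  shows "degree (\<Prod>x\<in>#M. [:- x, 1:]) = size M"
    and "coeff (\<Prod>x\<in>#M. [:- x, 1:]) (size M) = 1"
    and "M \<noteq> {#} \<Longrightarrow> coeff (\<Prod>x\<in>#M. [:- x, 1:]) (size M - 1) = - sum_mset M"
proof -
  have "degree (\<Prod>x\<in>#M. [:- x, 1:]) = size M \<and> coeff (\<Prod>x\<in>#M. [:- x, 1:]) (size M) = 1
     \<and> (M \<noteq> {#} \<longrightarrow> coeff (\<Prod>x\<in>#M. [:- x, 1:]) (size M - 1) = - sum_mset M)"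
  proof (induction M)
    case (add a M)
    let ?Q = "\<Prod>x\<in>#M. [:- x, 1:]"
    have "(\<Prod>x\<in>#add_mset a M. [:- x, 1:]) = smult (- a) ?Q + pCons 0 ?Q" by simp
    moreover have "degree (smult (- a) ?Q + pCons 0 ?Q) = Suc (size M)"
      using add.IH degree_smult_le[of "- a" ?Q]
      by (subst degree_add_eq_right) auto
    moreover have "coeff (smult (- a) ?Q + pCons 0 ?Q) (size M) = - (a + sum_mset M)"
      using add.IH by (cases "size M") auto
    ultimately show ?case using add.IH by (simp add: coeff_eq_0)
  qed simp
  then show "degree (\<Prod>x\<in>#M. [:- x, 1:]) = size M" "coeff (\<Prod>x\<in>#M. [:- x, 1:]) (size M) = 1"
    "M \<noteq> {#} \<Longrightarrow> coeff (\<Prod>x\<in>#M. [:- x, 1:]) (size M - 1) = - sum_mset M"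
    by simp_all
qed

lemma prod_linear_coeffs:
  fixes a :: "'a \<Rightarrow> 'b::comm_ring_1"
  assumes "finite J"
  shows "degree (\<Prod>j\<in>J. [:- a j, 1:]) = card J"
    and "coeff (\<Prod>j\<in>J. [:- a j, 1:]) (card J) = 1"
    and "J \<noteq> {} \<Longrightarrow> coeff (\<Prod>j\<in>J. [:- a j, 1:]) (card J - 1) = - (\<Sum>j\<in>J. a j)"
proof -
  let ?M = "image_mset a (mset_set J)"
  have P: "(\<Prod>j\<in>J. [:- a j, 1:]) = (\<Prod>x\<in>#?M. [:- x, 1:])"
    by (simp add: prod_unfold_prod_mset multiset.map_comp comp_def)
  have "size ?M = card J" by simp
  then show "degree (\<Prod>j\<in>J. [:- a j, 1:]) = card J" "coeff (\<Prod>j\<in>J. [:- a j, 1:]) (card J) = 1"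
    "J \<noteq> {} \<Longrightarrow> coeff (\<Prod>j\<in>J. [:- a j, 1:]) (card J - 1) = - (\<Sum>j\<in>J. a j)"
    unfolding P using prod_mset_linear_coeffs[of ?M] assms
    by (simp_all add: sum_unfold_sum_mset mset_set_empty_iff)
qed

lemma prod_mset_linear_proots_dvd:
  fixes q :: "'a::idom poly"
  assumes "q \<noteq> 0"
  shows "(\<Prod>x\<in>#proots q. [:- x, 1:]) dvd q"
  using assms
proof (induction "degree q" arbitrary: q rule: less_induct)
  case less
  show ?case
  proof (cases "\<exists>a. poly q a = 0")
    case False
    then have "proots q = {#}" using less.prems by (simp flip: set_mset_eq_empty_iff)
    then show ?thesis by simp
  next
    case True
    then obtain a q' where q: "q = [:- a, 1:] * q'"
      by (metis dvdE poly_eq_0_iff_dvd)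
    have l: "[:- a, 1:] \<noteq> 0" and "q' \<noteq> 0" using less.prems q by auto
    have "degree q' < degree q"
      unfolding q using degree_mult_eq[OF l \<open>q' \<noteq> 0\<close>] by simp
    then have IH: "(\<Prod>x\<in>#proots q'. [:- x, 1:]) dvd q'"
      using less.hyps \<open>q' \<noteq> 0\<close> by blast
    have "proots q = add_mset a (proots q')"
      unfolding q using proots_mult[OF l \<open>q' \<noteq> 0\<close>] by simp
    then show ?thesis
      unfolding q using mult_dvd_mono[OF dvd_refl IH, of "[:- a, 1:]"] by simp
  qed
qed

lemma sum_proots_split_poly:
  fixes q :: "'a::field poly"
  assumes "q \<noteq> 0" and split: "size (proots q) = degree q" and "degree q \<ge> 1"
  shows "sum_mset (proots q) = - coeff q (degree q - 1) / lead_coeff q"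
proof -
  define M where "M = proots q"
  define Q where "Q = (\<Prod>x\<in>#M. [:- x, 1:])"
  obtain s where s: "q = Q * s"
    using prod_mset_linear_proots_dvd[OF \<open>q \<noteq> 0\<close>] unfolding Q_def M_def by (rule dvdE)
  have "Q \<noteq> 0" "s \<noteq> 0" using s \<open>q \<noteq> 0\<close> by auto
  have "M \<noteq> {#}" and dq: "degree q = size M" using split assms(3) by (auto simp: M_def)
  have "degree q = degree Q + degree s"
    unfolding s by (rule degree_mult_eq) fact+
  then have "degree s = 0"
    using dq prod_mset_linear_coeffs(1)[of M] by (simp add: Q_def)
  then obtain c where "s = [:c:]" by (metis degree_eq_zeroE)
  then have q: "q = smult c Q" using s by simp
  have "coeff q (degree q - 1) = - c * sum_mset M" and "lead_coeff q = c"
    unfolding dq unfolding q using prod_mset_linear_coeffs[of M] \<open>M \<noteq> {#}\<close> by (simp_all add: Q_def)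
  moreover have "c \<noteq> 0" using \<open>q \<noteq> 0\<close> q by auto
  ultimately show ?thesis by (simp add: M_def)
qed

lemma proots_prod_linear:
  fixes a :: "'a \<Rightarrow> 'b::idom"
  assumes "finite J"
  shows "proots (\<Prod>j\<in>J. [:- a j, 1:]) = image_mset a (mset_set J)"
proof -
  have "proots (\<Prod>j\<in>J. [:- a j, 1:]) = (\<Sum>j\<in>J. {#a j#})"
    by (subst proots_prod) auto
  also have "\<dots> = image_mset a (mset_set J)"
    using assms by (induction J rule: finite_induct) auto
  finally show ?thesis .
qed

lemma pcompose_prod_linear_reflect:
  fixes a :: "'a \<Rightarrow> 'b::comm_ring_1"
  shows "pcompose (\<Prod>j\<in>J. [:- a j, 1:]) [:0, -1:] = smult ((-1) ^ card J) (\<Prod>j\<in>J. [:a j, 1:])"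
proof -
  have "pcompose (\<Prod>j\<in>J. [:- a j, 1:]) [:0, -1:] = (\<Prod>j\<in>J. smult (-1) [:a j, 1:])"
    unfolding pcompose_prod by (intro prod.cong) (simp_all add: pcompose_pCons)
  then show ?thesis by (simp only: prod_smult prod_constant)
qed

lemma count_above_proots_linear_mult:
  fixes q :: "'a::linordered_idom poly"
  assumes "q \<noteq> 0"
  shows "count_above (proots ([:- a, 1:] * q)) t = count_above (proots q) t + (if t < a then 1 else 0)"
proof -
  have "proots ([:- a, 1:] * q) = add_mset a (proots q)"
    using proots_mult[of "[:- a, 1:]" q] assms by simp
  then show ?thesis by (simp add: count_above_def)
qed

lemma card_le_count_roots_between_if_alternating:
  fixes q :: "real poly" and V :: "real set"
  assumes "finite V" and "q \<noteq> 0"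
    and alternating: "\<And>a b. a \<in> V \<Longrightarrow> b \<in> V \<Longrightarrow> a < b \<Longrightarrow> \<forall>c\<in>V. \<not> (a < c \<and> c < b) \<Longrightarrow>
      poly q a * poly q b < 0"
    and "\<forall>v\<in>V. s \<le> v \<and> v \<le> e"
  shows "card V \<le> size {#x \<in># proots q. s < x \<and> x < e#} + 1"
  using assms(1,3,4)
proof (induction V arbitrary: e rule: finite_linorder_max_induct)
  case (insert b V)
  show ?case
  proof (cases "V = {}")
    case False
    define a where "a = Max V"
    have "a \<in> V" "\<forall>c\<in>V. c \<le> a" "a < b"
      using insert.hyps False by (simp_all add: a_def)
    then have "poly q a * poly q b < 0"
      by (intro insert.prems(1)) auto
    then obtain x where x: "a < x" "x < b" "poly q x = 0"
      using poly_IVT[OF \<open>a < b\<close>] by auto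
    have "card V \<le> size {#y \<in># proots q. s < y \<and> y < a#} + 1"
    proof (rule insert.IH)
      fix c d assume "c \<in> V" "d \<in> V" "c < d" "\<forall>x\<in>V. \<not> (c < x \<and> x < d)"
      moreover have "d < b" using insert.hyps(2) \<open>d \<in> V\<close> by simp
      ultimately show "poly q c * poly q d < 0" by (intro insert.prems(1)) auto
    next
      show "\<forall>v\<in>V. s \<le> v \<and> v \<le> a" using insert.prems(2) \<open>\<forall>c\<in>V. c \<le> a\<close> by auto
    qed
    have "x \<in># proots q" using x \<open>q \<noteq> 0\<close> by simp
    then have "add_mset x {#y \<in># proots q. s < y \<and> y < a#} \<subseteq># {#y \<in># proots q. s < y \<and> y < e#}"
      using x insert.prems(2) \<open>a \<in> V\<close>
      by (intro mset_subset_eqI) (auto simp: count_eq_zero_iff)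
    then have "size {#y \<in># proots q. s < y \<and> y < a#} + 1 \<le> size {#y \<in># proots q. s < y \<and> y < e#}"
      using size_mset_mono by fastforce
    moreover have "b \<notin> V" using insert.hyps(2) by blast
    ultimately show ?thesis using \<open>card V \<le> _\<close> insert.hyps(1) by simp
  qed simp
qed simp

lemma sgn_prod_sub:
  fixes a :: "'a \<Rightarrow> 'b::linordered_idom"
  assumes "finite J" and "x \<notin> a ` J"
  shows "sgn (\<Prod>j\<in>J. x - a j) = (-1) ^ card {j\<in>J. x < a j}"
  using assms
proof (induction J rule: finite_induct)
  case (insert i J)
  have "x \<noteq> a i" and IH: "sgn (\<Prod>j\<in>J. x - a j) = (-1) ^ card {j\<in>J. x < a j}"
    using insert by auto
  have "{j \<in> insert i J. x < a j} = (if x < a i then insert i {j\<in>J. x < a j} else {j\<in>J. x < a j})"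
    by auto
  then have card: "card {j \<in> insert i J. x < a j} = card {j\<in>J. x < a j} + (if x < a i then 1 else 0)"
    using insert.hyps by simp
  have "sgn (\<Prod>j\<in>insert i J. x - a j) = sgn (x - a i) * sgn (\<Prod>j\<in>J. x - a j)"
    using insert.hyps by (simp add: sgn_mult)
  also have "sgn (x - a i) = (if x < a i then -1 else 1)"
    using \<open>x \<noteq> a i\<close> by (simp add: sgn_if)
  finally show ?case unfolding IH card by simp
qed simp

section \<open>Weighted polynomials\<close>

definition weighted_poly :: "'a set \<Rightarrow> ('a \<Rightarrow> real) \<Rightarrow> ('a \<Rightarrow> real) \<Rightarrow> real poly" where
  "weighted_poly I lam w = (\<Sum>i\<in>I. smult (w i) (\<Prod>j\<in>I - {i}. [:- lam j, 1:]))"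

definition partial_fraction_sum :: "'a set \<Rightarrow> ('a \<Rightarrow> real) \<Rightarrow> ('a \<Rightarrow> real) \<Rightarrow> real \<Rightarrow> real" where
  "partial_fraction_sum I lam w x = (\<Sum>i\<in>I. w i / (x - lam i))"

lemma weighted_poly_coeffs:
  fixes lam w :: "'a \<Rightarrow> real"
  assumes "finite I" and "I \<noteq> {}"
  shows "degree (weighted_poly I lam w) \<le> card I - 1"
    and "coeff (weighted_poly I lam w) (card I - 1) = (\<Sum>i\<in>I. w i)"
    and "2 \<le> card I \<Longrightarrow>
      coeff (weighted_poly I lam w) (card I - 2) = - (\<Sum>i\<in>I. w i * (\<Sum>j\<in>I - {i}. lam j))"
proof -
  let ?P = "\<lambda>i. \<Prod>j\<in>I - {i}. [:- lam j, 1:]"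
  have card: "card (I - {i}) = card I - 1" if "i \<in> I" for i
    using assms(1) that by simp
  have deg: "degree (?P i) = card I - 1" and lead: "coeff (?P i) (card I - 1) = 1" if "i \<in> I" for i
    using prod_linear_coeffs(1,2)[of "I - {i}" lam] assms(1) card[OF that] by simp_all
  show "degree (weighted_poly I lam w) \<le> card I - 1"
    unfolding weighted_poly_def using assms(1) deg
    by (intro degree_sum_le) (auto intro: order.trans[OF degree_smult_le])
  show "coeff (weighted_poly I lam w) (card I - 1) = (\<Sum>i\<in>I. w i)"
    unfolding weighted_poly_def coeff_sum coeff_smult using lead by (intro sum.cong) auto
  assume "2 \<le> card I"
  have "coeff (?P i) (card I - 2) = - (\<Sum>j\<in>I - {i}. lam j)" if "i \<in> I" for i
  proof -
    have "card (I - {i}) \<noteq> 0" and "card I - 2 = card (I - {i}) - 1"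
      using \<open>2 \<le> card I\<close> card[OF that] by auto
    then have "I - {i} \<noteq> {}" and "card I - 2 = card (I - {i}) - 1" by (metis card.empty)+
    then show ?thesis using prod_linear_coeffs(3)[of "I - {i}" lam] assms(1) by simp
  qed
  then have "(\<Sum>i\<in>I. w i * coeff (?P i) (card I - 2)) = (\<Sum>i\<in>I. - (w i * (\<Sum>j\<in>I - {i}. lam j)))"
    by (intro sum.cong) auto
  then show "coeff (weighted_poly I lam w) (card I - 2) = - (\<Sum>i\<in>I. w i * (\<Sum>j\<in>I - {i}. lam j))"
    unfolding weighted_poly_def coeff_sum coeff_smult by (simp add: sum_negf)
qed

lemma weighted_poly_nonzero:
  assumes "finite I" and "(\<Sum>i\<in>I. w i) \<noteq> 0"
  shows "weighted_poly I lam w \<noteq> 0"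
proof -
  have "I \<noteq> {}" using assms(2) by auto
  then show ?thesis using weighted_poly_coeffs(2)[OF assms(1), of lam w] assms(2) by auto
qed

lemma poly_weighted_poly:
  "poly (weighted_poly I lam w) x = (\<Sum>i\<in>I. w i * (\<Prod>j\<in>I - {i}. x - lam j))"
  unfolding weighted_poly_def by (simp add: poly_sum poly_prod)

lemma poly_weighted_poly_off_nodes:
  assumes "finite I" and "x \<notin> lam ` I"
  shows "poly (weighted_poly I lam w) x = (\<Prod>j\<in>I. x - lam j) * partial_fraction_sum I lam w x"
proof -
  have "w i * (\<Prod>j\<in>I - {i}. x - lam j) = (\<Prod>j\<in>I. x - lam j) * (w i / (x - lam i))" if "i \<in> I" for i
  proof -
    have "(\<Prod>j\<in>I. x - lam j) = (x - lam i) * (\<Prod>j\<in>I - {i}. x - lam j)"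
      using assms(1) that by (simp add: prod.remove)
    moreover have "x - lam i \<noteq> 0" using assms(2) that by auto
    ultimately show ?thesis by simp
  qed
  then show ?thesis
    unfolding poly_weighted_poly partial_fraction_sum_def sum_distrib_left by (rule sum.cong[OF refl])
qed

lemma poly_weighted_poly_node:
  assumes "finite I" and "i \<in> I" and "inj_on lam I"
  shows "poly (weighted_poly I lam w) (lam i) = w i * (\<Prod>j\<in>I - {i}. lam i - lam j)"
proof -
  have "(\<Prod>j\<in>I - {k}. lam i - lam j) = 0" if "k \<in> I - {i}" for k
    using assms(1,2) that by (intro prod_zero) auto
  then have "(\<Sum>k\<in>I - {i}. w k * (\<Prod>j\<in>I - {k}. lam i - lam j)) = 0"
    by simp
  then show ?thesis
    unfolding poly_weighted_poly using assms(1,2) by (simp add: sum.remove)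
qed

lemma weighted_poly_remove_null_node:
  assumes "finite I" and "k \<in> I" and "w k = 0"
  shows "weighted_poly I lam w = [:- lam k, 1:] * weighted_poly (I - {k}) lam w"
proof -
  have "weighted_poly I lam w = (\<Sum>i\<in>I - {k}. smult (w i) (\<Prod>j\<in>I - {i}. [:- lam j, 1:]))"
    unfolding weighted_poly_def using assms by (simp add: sum.remove)
  also have "\<dots> = (\<Sum>i\<in>I - {k}. [:- lam k, 1:] * smult (w i) (\<Prod>j\<in>I - {k} - {i}. [:- lam j, 1:]))"
  proof (rule sum.cong[OF refl])
    fix i assume "i \<in> I - {k}"
    then have "I - {i} = insert k (I - {k} - {i})" using assms(2) by auto
    then show "smult (w i) (\<Prod>j\<in>I - {i}. [:- lam j, 1:])
        = [:- lam k, 1:] * smult (w i) (\<Prod>j\<in>I - {k} - {i}. [:- lam j, 1:])"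
      using assms(1) by simp
  qed
  also have "\<dots> = [:- lam k, 1:] * weighted_poly (I - {k}) lam w"
    unfolding weighted_poly_def by (simp add: sum_distrib_left)
  finally show ?thesis .
qed

lemma weighted_poly_merge_nodes:
  assumes "finite I" and "i \<in> I" and "k \<in> I" and "i \<noteq> k" and "lam i = lam k"
  shows "weighted_poly I lam w = [:- lam k, 1:] * weighted_poly (I - {k}) lam (w(i := w i + w k))"
proof -
  let ?L = "[:- lam k, 1:]"
  let ?P = "\<lambda>m. \<Prod>j\<in>I - {k} - {m}. [:- lam j, 1:]"
  have factor: "(\<Prod>j\<in>I - {m}. [:- lam j, 1:]) = ?L * ?P (if m = k then i else m)" if "m \<in> I" for m
  proof (cases "m = k")
    case True
    then show ?thesis using assms by (simp add: prod.remove)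
  next
    case False
    then have "I - {m} = insert k (I - {k} - {m})" using assms(3) that by auto
    then show ?thesis using False assms(1) by simp
  qed
  have "weighted_poly I lam w
      = (\<Sum>m\<in>I - {k}. smult (w m) (\<Prod>j\<in>I - {m}. [:- lam j, 1:])) + smult (w k) (\<Prod>j\<in>I - {k}. [:- lam j, 1:])"
    unfolding weighted_poly_def using assms(1,3) by (simp add: sum.remove add.commute)
  also have "\<dots> = ?L * ((\<Sum>m\<in>I - {k}. smult (w m) (?P m)) + smult (w k) (?P i))"
    using factor assms(3) by (simp add: sum_distrib_left distrib_left mult_smult_right)
  also have "(\<Sum>m\<in>I - {k}. smult (w m) (?P m)) + smult (w k) (?P i) = weighted_poly (I - {k}) lam (w(i := w i + w k))"
  proof -
    have "weighted_poly (I - {k}) lam (w(i := w i + w k))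
        = (\<Sum>m\<in>I - {k}. smult (w m) (?P m) + (if m = i then smult (w k) (?P i) else 0))"
      unfolding weighted_poly_def by (intro sum.cong) (auto simp: smult_add_left)
    also have "\<dots> = (\<Sum>m\<in>I - {k}. smult (w m) (?P m)) + smult (w k) (?P i)"
      using assms(1,2,4) by (simp add: sum.distrib)
    finally show ?thesis by simp
  qed
  finally show ?thesis .
qed

lemma partial_fraction_sum_remove_null_node:
  assumes "finite I" and "k \<in> I" and "w k = 0"
  shows "partial_fraction_sum I lam w x = partial_fraction_sum (I - {k}) lam w x"
  unfolding partial_fraction_sum_def using assms by (simp add: sum.remove)

lemma partial_fraction_sum_merge_nodes:
  assumes "finite I" and "i \<in> I" and "k \<in> I" and "i \<noteq> k" and "lam i = lam k"
  shows "partial_fraction_sum I lam w x = partial_fraction_sum (I - {k}) lam (w(i := w i + w k)) x"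
proof -
  have "partial_fraction_sum (I - {k}) lam (w(i := w i + w k)) x
      = (\<Sum>m\<in>I - {k}. w m / (x - lam m) + (if m = i then w k / (x - lam k) else 0))"
    unfolding partial_fraction_sum_def using assms(5) by (intro sum.cong) (auto simp: add_divide_distrib)
  also have "\<dots> = (\<Sum>m\<in>I - {k}. w m / (x - lam m)) + w k / (x - lam k)"
    using assms(1,2,4) by (simp add: sum.distrib)
  also have "\<dots> = partial_fraction_sum I lam w x"
    unfolding partial_fraction_sum_def using sum.remove[OF assms(1,3), of "\<lambda>m. w m / (x - lam m)"] by simp
  finally show ?thesis by simp
qed

lemma weighted_poly_reduce_degenerate:
  fixes lam w :: "'a \<Rightarrow> real"
  assumes "finite I" and "\<forall>i\<in>I. 0 \<le> w i" and "\<not> ((\<forall>i\<in>I. 0 < w i) \<and> inj_on lam I)"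
  obtains k w' where "k \<in> I"
    and "weighted_poly I lam w = [:- lam k, 1:] * weighted_poly (I - {k}) lam w'"
    and "\<And>x. partial_fraction_sum I lam w x = partial_fraction_sum (I - {k}) lam w' x"
    and "\<forall>i\<in>I - {k}. 0 \<le> w' i" and "(\<Sum>i\<in>I - {k}. w' i) = (\<Sum>i\<in>I. w i)"
proof -
  consider (null) k where "k \<in> I" "w k = 0"
    | (repeated) i k where "i \<in> I" "k \<in> I" "i \<noteq> k" "lam i = lam k"
    using assms(2,3) by (force simp: inj_on_def)
  then show ?thesis
  proof cases
    case null
    then show ?thesis
      using assms(1,2) weighted_poly_remove_null_node partial_fraction_sum_remove_null_node
      by (intro that[of k w]) (auto simp: sum.remove)
  next
    case repeated
    have "(\<Sum>m\<in>I - {k}. (w(i := w i + w k)) m) = (\<Sum>m\<in>I - {k}. w m + (if m = i then w k else 0))"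
      by (intro sum.cong) auto
    also have "\<dots> = (\<Sum>m\<in>I - {k}. w m) + w k"
      using assms(1) repeated by (simp add: sum.distrib)
    also have "\<dots> = (\<Sum>m\<in>I. w m)"
      using sum.remove[OF assms(1) \<open>k \<in> I\<close>, of w] by simp
    finally show ?thesis
      using assms(1,2) repeated weighted_poly_merge_nodes partial_fraction_sum_merge_nodes
      by (intro that[of k "w(i := w i + w k)"]) auto
  qed
qed

lemma partial_fraction_sum_pos:
  assumes "finite I" and "\<forall>i\<in>I. 0 \<le> w i" and "0 < (\<Sum>i\<in>I. w i)" and "\<forall>i\<in>I. lam i < x"
  shows "0 < partial_fraction_sum I lam w x"
proof -
  obtain i where "i \<in> I" "0 < w i"
    using assms(3) by (metis not_less sum_nonpos)
  then show ?thesis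
    unfolding partial_fraction_sum_def using assms(1,2,4) by (intro sum_pos2[of I i]) auto
qed

lemma partial_fraction_sum_neg:
  assumes "finite I" and "\<forall>i\<in>I. 0 \<le> w i" and "0 < (\<Sum>i\<in>I. w i)" and "\<forall>i\<in>I. x < lam i"
  shows "partial_fraction_sum I lam w x < 0"
proof -
  have "partial_fraction_sum I lam w x = - partial_fraction_sum I (\<lambda>i. - lam i) w (- x)"
    unfolding partial_fraction_sum_def by (simp add: sum_negf[symmetric] divide_minus_right[symmetric])
  then show ?thesis using partial_fraction_sum_pos[of I w "\<lambda>i. - lam i" "- x"] assms by simp
qed

lemma card_nodes_above_below:
  fixes lam :: "'a \<Rightarrow> real"
  assumes "finite I" and "t \<notin> lam ` I"
  shows "card {i\<in>I. t < lam i} + card {i\<in>I. lam i < t} = card I"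
proof -
  have "I = {i\<in>I. t < lam i} \<union> {i\<in>I. lam i < t}" using assms(2) by force
  moreover have "card ({i\<in>I. t < lam i} \<union> {i\<in>I. lam i < t}) = card {i\<in>I. t < lam i} + card {i\<in>I. lam i < t}"
    using assms(1) by (intro card_Un_disjoint) auto
  ultimately show ?thesis by simp
qed

context
  fixes I :: "'a set" and lam w :: "'a \<Rightarrow> real"
  assumes finite_nodes: "finite I" and nonempty_nodes: "I \<noteq> {}"
    and weights_pos: "\<forall>i\<in>I. 0 < w i" and nodes_distinct: "inj_on lam I"
begin

lemma weighted_poly_nonzero_generic: "weighted_poly I lam w \<noteq> 0"
  using weighted_poly_nonzero finite_nodes nonempty_nodes weights_pos
  by (metis less_irrefl sum_pos)

lemma sgn_poly_weighted_poly_node: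
  assumes "i \<in> I"
  shows "sgn (poly (weighted_poly I lam w) (lam i)) = (-1) ^ card {j\<in>I. lam i < lam j}"
proof -
  have "lam i \<notin> lam ` (I - {i})" using nodes_distinct assms by (auto dest: inj_onD)
  then have "sgn (\<Prod>j\<in>I - {i}. lam i - lam j) = (-1) ^ card {j\<in>I - {i}. lam i < lam j}"
    using finite_nodes by (intro sgn_prod_sub) auto
  moreover have "{j\<in>I - {i}. lam i < lam j} = {j\<in>I. lam i < lam j}" by auto
  ultimately show ?thesis
    using poly_weighted_poly_node[OF finite_nodes assms nodes_distinct] weights_pos assms
    by (simp add: sgn_mult)
qed

lemma sgn_poly_weighted_poly_off_nodes:
  assumes "x \<notin> lam ` I"
  shows "sgn (poly (weighted_poly I lam w) x)
    = (-1) ^ card {j\<in>I. x < lam j} * sgn (partial_fraction_sum I lam w x)"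
  using poly_weighted_poly_off_nodes[OF finite_nodes assms] sgn_prod_sub[OF finite_nodes assms]
  by (simp add: sgn_mult)

lemma poly_weighted_poly_sign_change:
  assumes "t \<notin> lam ` I" and "a \<in> insert t (lam ` I)" and "b \<in> insert t (lam ` I)" and "a < b"
    and between: "\<forall>j\<in>I. \<not> (a < lam j \<and> lam j < b)"
    and "a = t \<Longrightarrow> 0 < partial_fraction_sum I lam w t"
    and "b = t \<Longrightarrow> partial_fraction_sum I lam w t < 0"
  shows "poly (weighted_poly I lam w) a * poly (weighted_poly I lam w) b < 0"
proof -
  let ?p = "weighted_poly I lam w" and ?N = "\<lambda>x. card {j\<in>I. x < lam j}"
  define \<sigma> where "\<sigma> x = (if x = t then sgn (partial_fraction_sum I lam w t) else 1)" for x
  have sgn_eq: "sgn (poly ?p x) = (-1) ^ ?N x * \<sigma> x" if "x \<in> insert t (lam ` I)" for x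
    using that assms(1) sgn_poly_weighted_poly_off_nodes sgn_poly_weighted_poly_node
    by (auto simp: \<sigma>_def)
  have "{j\<in>I. a < lam j} = {j\<in>I. b < lam j} \<union> {j\<in>I. lam j = b}"
    using \<open>a < b\<close> between by force
  moreover have "card ({j\<in>I. b < lam j} \<union> {j\<in>I. lam j = b}) = ?N b + card {j\<in>I. lam j = b}"
    using finite_nodes by (intro card_Un_disjoint) auto
  ultimately have N: "?N a = ?N b + card {j\<in>I. lam j = b}" by simp
  have "card {j\<in>I. lam j = b} = (if b = t then 0 else 1)"
  proof (cases "b = t")
    case False
    then obtain i where "i \<in> I" "b = lam i" using assms(3) by auto
    then have "{j\<in>I. lam j = b} = {i}" using nodes_distinct by (auto dest: inj_onD)
    then show ?thesis using False by simp
  qed (use assms(1) in \<open>auto simp: card_eq_0_iff\<close>)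
  moreover have "\<sigma> a = 1" using assms(6) by (simp add: \<sigma>_def)
  moreover have "\<sigma> b = (if b = t then -1 else 1)" using assms(7) by (simp add: \<sigma>_def)
  ultimately have "sgn (poly ?p a * poly ?p b) = -1"
    using sgn_eq[OF assms(2)] sgn_eq[OF assms(3)] N by (simp add: sgn_mult power_add)
  then show ?thesis by (simp add: sgn_1_neg)
qed

lemma nodes_above_le_count_above:
  assumes "t \<notin> lam ` I"
  shows "card {i\<in>I. t < lam i} + (if 0 < partial_fraction_sum I lam w t then 1 else 0)
    \<le> count_above (proots (weighted_poly I lam w)) t + 1"
proof -
  let ?p = "weighted_poly I lam w" and ?F = "partial_fraction_sum I lam w t"
  define V where "V = lam ` {i\<in>I. t < lam i} \<union> (if 0 < ?F then {t} else {})"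
  define e where "e = Max (insert t (lam ` I))"
  have "card (lam ` {i\<in>I. t < lam i}) = card {i\<in>I. t < lam i}"
    using nodes_distinct by (intro card_image) (auto intro: inj_on_subset)
  then have "card {i\<in>I. t < lam i} + (if 0 < ?F then 1 else 0) = card V"
    unfolding V_def using finite_nodes by (auto simp: card_insert_if)
  also have "card V \<le> size {#x \<in># proots ?p. t < x \<and> x < e#} + 1"
  proof (rule card_le_count_roots_between_if_alternating)
    show "finite V" using finite_nodes by (simp add: V_def)
    show "?p \<noteq> 0" by (rule weighted_poly_nonzero_generic)
    show "\<forall>v\<in>V. t \<le> v \<and> v \<le> e" unfolding V_def e_def using finite_nodes by auto
    fix a b assume "a \<in> V" "b \<in> V" "a < b" and consecutive: "\<forall>c\<in>V. \<not> (a < c \<and> c < b)"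
    have "t \<le> a" using \<open>a \<in> V\<close> by (auto simp: V_def split: if_splits)
    show "poly ?p a * poly ?p b < 0"
    proof (rule poly_weighted_poly_sign_change[OF assms])
      show "a \<in> insert t (lam ` I)" "b \<in> insert t (lam ` I)"
        using \<open>a \<in> V\<close> \<open>b \<in> V\<close> by (auto simp: V_def split: if_splits)
      show "\<forall>j\<in>I. \<not> (a < lam j \<and> lam j < b)"
        using consecutive \<open>t \<le> a\<close> by (auto simp: V_def)
      show "a = t \<Longrightarrow> 0 < ?F" using \<open>a \<in> V\<close> by (auto simp: V_def split: if_splits)
      show "b = t \<Longrightarrow> ?F < 0" using \<open>a < b\<close> \<open>t \<le> a\<close> by simp
    qed fact
  qed
  also have "size {#x \<in># proots ?p. t < x \<and> x < e#} \<le> count_above (proots ?p) t"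
    unfolding count_above_def by (intro size_mset_mono filter_mset_mono_strong) auto
  finally show ?thesis by simp
qed

lemma nodes_below_le_count_below:
  assumes "t \<notin> lam ` I"
  shows "card {i\<in>I. lam i < t} + (if partial_fraction_sum I lam w t < 0 then 1 else 0)
    \<le> size {#x \<in># proots (weighted_poly I lam w). x < t#} + 1"
proof -
  let ?p = "weighted_poly I lam w" and ?F = "partial_fraction_sum I lam w t"
  define V where "V = lam ` {i\<in>I. lam i < t} \<union> (if ?F < 0 then {t} else {})"
  define s where "s = Min (insert t (lam ` I))"
  have "card (lam ` {i\<in>I. lam i < t}) = card {i\<in>I. lam i < t}"
    using nodes_distinct by (intro card_image) (auto intro: inj_on_subset)
  then have "card {i\<in>I. lam i < t} + (if ?F < 0 then 1 else 0) = card V"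
    unfolding V_def using finite_nodes by (auto simp: card_insert_if)
  also have "card V \<le> size {#x \<in># proots ?p. s < x \<and> x < t#} + 1"
  proof (rule card_le_count_roots_between_if_alternating)
    show "finite V" using finite_nodes by (simp add: V_def)
    show "?p \<noteq> 0" by (rule weighted_poly_nonzero_generic)
    show "\<forall>v\<in>V. s \<le> v \<and> v \<le> t" unfolding V_def s_def using finite_nodes by auto
    fix a b assume "a \<in> V" "b \<in> V" "a < b" and consecutive: "\<forall>c\<in>V. \<not> (a < c \<and> c < b)"
    have "b \<le> t" using \<open>b \<in> V\<close> by (auto simp: V_def split: if_splits)
    show "poly ?p a * poly ?p b < 0"
    proof (rule poly_weighted_poly_sign_change[OF assms])
      show "a \<in> insert t (lam ` I)" "b \<in> insert t (lam ` I)"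
        using \<open>a \<in> V\<close> \<open>b \<in> V\<close> by (auto simp: V_def split: if_splits)
      show "\<forall>j\<in>I. \<not> (a < lam j \<and> lam j < b)"
        using consecutive \<open>b \<le> t\<close> by (auto simp: V_def)
      show "a = t \<Longrightarrow> 0 < ?F" using \<open>a < b\<close> \<open>b \<le> t\<close> by simp
      show "b = t \<Longrightarrow> ?F < 0" using \<open>b \<in> V\<close> assms by (auto simp: V_def split: if_splits)
    qed fact
  qed
  also have "size {#x \<in># proots ?p. s < x \<and> x < t#} \<le> size {#x \<in># proots ?p. x < t#}"
    by (intro size_mset_mono filter_mset_mono_strong) auto
  finally show ?thesis by simp
qed

text \<open>The degree bound leaves no room for further roots, so both counts above are exact.\<close>

lemma count_above_weighted_poly_generic:
  assumes "t \<notin> lam ` I"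
  shows "count_above (proots (weighted_poly I lam w)) t
    = card {i\<in>I. t < lam i} - (if partial_fraction_sum I lam w t \<le> 0 then 1 else 0)"
proof -
  let ?p = "weighted_poly I lam w" and ?F = "partial_fraction_sum I lam w t"
  define above where "above = card {i\<in>I. t < lam i}"
  define below where "below = card {i\<in>I. lam i < t}"
  define A where "A = count_above (proots ?p) t"
  define B where "B = size {#x \<in># proots ?p. x < t#}"
  define C where "C = count (proots ?p) t"
  have "above + below = card I"
    unfolding above_def below_def by (rule card_nodes_above_below[OF finite_nodes assms])
  moreover have "card I \<ge> 1"
    using finite_nodes nonempty_nodes by (simp add: Suc_le_eq card_gt_0_iff)
  moreover have "A + B + C \<le> card I - 1"
    using size_proots_le[of ?p] weighted_poly_coeffs(1)[OF finite_nodes nonempty_nodes, of lam w]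
      size_eq_count_above_below[of "proots ?p" t] by (simp add: A_def B_def C_def)
  ultimately have total: "A + B + C + 1 \<le> above + below" by linarith
  have A: "above + (if 0 < ?F then 1 else 0) \<le> A + 1"
    using nodes_above_le_count_above[OF assms] by (simp add: above_def A_def)
  have B: "below + (if ?F < 0 then 1 else 0) \<le> B + 1"
    using nodes_below_le_count_below[OF assms] by (simp add: below_def B_def)
  consider (pos) "0 < ?F" | (zero) "?F = 0" | (neg) "?F < 0" by linarith
  then have "A = above - (if ?F \<le> 0 then 1 else 0)"
  proof cases
    case pos
    then have "A = above" using A B total by simp
    then show ?thesis using pos by simp
  next
    case zero
    then have "poly ?p t = 0" using poly_weighted_poly_off_nodes[OF finite_nodes assms, of w] by simp
    then have "1 \<le> C" using weighted_poly_nonzero_generic by (auto simp: C_def order_root)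
    then have "A + 1 = above" using zero A B total by simp
    then show ?thesis using zero by simp
  next
    case neg
    then have "A + 1 = above" using A B total by simp
    then show ?thesis using neg by simp
  qed
  then show ?thesis by (simp add: above_def A_def)
qed

end

text \<open>The subtraction never truncates: a nonpositive partial fraction sum at t forces a node above t.\<close>

lemma count_above_weighted_poly:
  fixes lam w :: "'a \<Rightarrow> real"
  assumes "finite I" and "\<forall>i\<in>I. 0 \<le> w i" and "0 < (\<Sum>i\<in>I. w i)" and "t \<notin> lam ` I"
  shows "count_above (proots (weighted_poly I lam w)) t
    = card {i\<in>I. t < lam i} - (if partial_fraction_sum I lam w t \<le> 0 then 1 else 0)"
  using assms
proof (induction "card I" arbitrary: I w rule: less_induct)
  case less
  show ?case
  proof (cases "(\<forall>i\<in>I. 0 < w i) \<and> inj_on lam I")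
    case True
    have "I \<noteq> {}" using less.prems(3) by auto
    then show ?thesis using True less.prems by (intro count_above_weighted_poly_generic) auto
  next
    case False
    obtain k w' where "k \<in> I"
      and p: "weighted_poly I lam w = [:- lam k, 1:] * weighted_poly (I - {k}) lam w'"
      and F: "\<And>x. partial_fraction_sum I lam w x = partial_fraction_sum (I - {k}) lam w' x"
      and w': "\<forall>i\<in>I - {k}. 0 \<le> w' i" and sum: "(\<Sum>i\<in>I - {k}. w' i) = (\<Sum>i\<in>I. w i)"
      using weighted_poly_reduce_degenerate[OF less.prems(1,2) False] by blast
    let ?J = "I - {k}"
    have "card ?J < card I" using less.prems(1) \<open>k \<in> I\<close> by (rule card_Diff1_less)
    moreover have "t \<notin> lam ` ?J" using less.prems(4) by auto
    ultimately have IH: "count_above (proots (weighted_poly ?J lam w')) t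
        = card {i\<in>?J. t < lam i} - (if partial_fraction_sum ?J lam w' t \<le> 0 then 1 else 0)"
      using less.prems(1,3) w' sum by (intro less.hyps) auto
    have "weighted_poly ?J lam w' \<noteq> 0"
      using weighted_poly_nonzero[of ?J w' lam] sum less.prems(1,3) by simp
    then have "count_above (proots (weighted_poly I lam w)) t
        = count_above (proots (weighted_poly ?J lam w')) t + (if t < lam k then 1 else 0)"
      unfolding p by (rule count_above_proots_linear_mult)
    moreover have "{i\<in>I. t < lam i} = (if t < lam k then insert k {i\<in>?J. t < lam i} else {i\<in>?J. t < lam i})"
      using \<open>k \<in> I\<close> by auto
    then have "card {i\<in>I. t < lam i} = card {i\<in>?J. t < lam i} + (if t < lam k then 1 else 0)"
      using less.prems(1) by simp
    moreover have "1 \<le> card {i\<in>?J. t < lam i}" if "partial_fraction_sum ?J lam w' t \<le> 0"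
    proof -
      have "\<not> (\<forall>i\<in>?J. lam i < t)"
        using partial_fraction_sum_pos[of ?J w' lam t] that w' sum less.prems(1,3) by auto
      then obtain i where "i \<in> ?J" "t < lam i" using less.prems(4) by force
      then show ?thesis using less.prems(1) by (auto simp: Suc_le_eq card_gt_0_iff)
    qed
    ultimately show ?thesis using IH F by auto
  qed
qed

lemma size_proots_weighted_poly:
  fixes lam w :: "'a \<Rightarrow> real"
  assumes "finite I" and "\<forall>i\<in>I. 0 \<le> w i" and "0 < (\<Sum>i\<in>I. w i)"
  shows "size (proots (weighted_poly I lam w)) = card I - 1"
proof -
  let ?p = "weighted_poly I lam w"
  define t where "t = Min (lam ` I) - 1"
  have "I \<noteq> {}" using assms(3) by auto
  have below: "\<forall>i\<in>I. t < lam i"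
    using assms(1) by (auto simp: t_def intro: Min_le less_le_trans[of _ "Min (lam ` I)"])
  then have "t \<notin> lam ` I" and "{i\<in>I. t < lam i} = I" by auto
  then have "count_above (proots ?p) t = card I - 1"
    using count_above_weighted_poly[OF assms] partial_fraction_sum_neg[OF assms below] by simp
  moreover have "count_above (proots ?p) t \<le> size (proots ?p)"
    by (simp add: count_above_def)
  moreover have "size (proots ?p) \<le> card I - 1"
    using size_proots_le[of ?p] weighted_poly_coeffs(1)[OF assms(1) \<open>I \<noteq> {}\<close>, of lam w] by simp
  ultimately show ?thesis by simp
qed

lemma sum_proots_weighted_poly:
  fixes lam w :: "'a \<Rightarrow> real"
  assumes "finite I" and "2 \<le> card I" and "\<forall>i\<in>I. 0 \<le> w i" and "0 < (\<Sum>i\<in>I. w i)"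
  shows "sum_mset (proots (weighted_poly I lam w)) = (\<Sum>j\<in>I. lam j) - (\<Sum>i\<in>I. w i * lam i) / (\<Sum>i\<in>I. w i)"
proof -
  let ?p = "weighted_poly I lam w" and ?W = "\<Sum>i\<in>I. w i"
  have "I \<noteq> {}" using assms(2) by auto
  have size: "size (proots ?p) = card I - 1" by (rule size_proots_weighted_poly[OF assms(1,3,4)])
  have "?p \<noteq> 0" using weighted_poly_nonzero[of I w lam] assms(1,4) by simp
  have deg: "degree ?p = card I - 1"
    using size_proots_le[of ?p] weighted_poly_coeffs(1)[OF assms(1) \<open>I \<noteq> {}\<close>, of lam w] size by simp
  have "sum_mset (proots ?p) = - coeff ?p (card I - 2) / coeff ?p (card I - 1)"
    using sum_proots_split_poly[OF \<open>?p \<noteq> 0\<close>] size deg assms(2) by (simp add: numeral_2_eq_2)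
  also have "\<dots> = (\<Sum>i\<in>I. w i * (\<Sum>j\<in>I - {i}. lam j)) / ?W"
    using weighted_poly_coeffs(2,3)[OF assms(1) \<open>I \<noteq> {}\<close>] assms(2) by simp
  also have "(\<Sum>i\<in>I. w i * (\<Sum>j\<in>I - {i}. lam j)) = (\<Sum>i\<in>I. w i * (\<Sum>j\<in>I. lam j) - w i * lam i)"
    using assms(1) by (intro sum.cong) (auto simp: sum_diff1 algebra_simps)
  also have "\<dots> / ?W = (\<Sum>j\<in>I. lam j) - (\<Sum>i\<in>I. w i * lam i) / ?W"
    using assms(4) by (simp add: sum_subtractf sum_distrib_right[symmetric] diff_divide_distrib)
  finally show ?thesis .
qed

lemma weighted_poly_reindex:
  assumes "bij_betw h I J"
  shows "weighted_poly J lam w = weighted_poly I (lam \<circ> h) (w \<circ> h)"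
proof -
  have inj: "inj_on h I" and J: "J = h ` I" using assms by (auto simp: bij_betw_def)
  have "(\<Prod>j\<in>h ` I - {h i}. [:- lam j, 1:]) = (\<Prod>j\<in>I - {i}. [:- (lam \<circ> h) j, 1:])" if "i \<in> I" for i
  proof -
    have "h ` I - {h i} = h ` (I - {i})" using inj that by (auto simp: inj_on_def)
    then show ?thesis using inj by (simp add: prod.reindex inj_on_diff)
  qed
  then show ?thesis
    unfolding weighted_poly_def J using inj by (simp add: sum.reindex)
qed

lemma weighted_poly_reflect:
  assumes "finite I"
  shows "weighted_poly I (\<lambda>i. - lam i) w = smult ((-1) ^ (card I - 1)) (pcompose (weighted_poly I lam w) [:0, -1:])"
proof -
  let ?s = "(-1 :: real) ^ (card I - 1)"
  have "smult ?s (pcompose (smult (w i) (\<Prod>j\<in>I - {i}. [:- lam j, 1:])) [:0, -1:])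
      = smult (w i) (\<Prod>j\<in>I - {i}. [:- (- lam j), 1:])" if "i \<in> I" for i
  proof -
    have reflect: "pcompose (smult (w i) (\<Prod>j\<in>I - {i}. [:- lam j, 1:])) [:0, -1:]
        = smult (w i * ?s) (\<Prod>j\<in>I - {i}. [:lam j, 1:])"
      using assms that by (simp add: pcompose_smult pcompose_prod_linear_reflect)
    have sign: "?s * (w i * ?s) = w i"
      by (simp add: mult.left_commute flip: power_mult_distrib)
    show ?thesis unfolding reflect smult_smult sign by simp
  qed
  moreover have "smult c (sum f I) = (\<Sum>i\<in>I. smult c (f i))" for c and f :: "'a \<Rightarrow> real poly"
    by (induction I rule: infinite_finite_induct) (simp_all add: smult_add_right)
  ultimately show ?thesis
    unfolding weighted_poly_def pcompose_sum by simp
qed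

section \<open>Segment sums of the roots\<close>

lemma sum_atLeastAtMost_reflect:
  fixes f :: "nat \<Rightarrow> 'a::comm_monoid_add"
  assumes "l \<le> r" and "r \<le> m"
  shows "(\<Sum>j=m-r..m-l. f (m - j)) = (\<Sum>j=l..r. f j)"
  by (rule sum.reindex_bij_witness[where i="\<lambda>j. m - j" and j="\<lambda>j. m - j"]) (use assms in auto)

lemma superlevel_set_antitone:
  fixes f :: "nat \<Rightarrow> 'a::linorder"
  assumes "\<And>i j. 1 \<le> i \<Longrightarrow> i \<le> j \<Longrightarrow> j \<le> m \<Longrightarrow> f j \<le> f i"
  shows "{i\<in>{1..m}. t < f i} = {1..card {i\<in>{1..m}. t < f i}}"
proof (cases "{i\<in>{1..m}. t < f i} = {}")
  case False
  define S where "S = {i\<in>{1..m}. t < f i}"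
  have "finite S" and "S \<noteq> {}" using False by (simp_all add: S_def)
  then have "Max S \<in> S" and "\<forall>i\<in>S. i \<le> Max S" by simp_all
  then have "S = {1..Max S}"
    using assms[of _ "Max S"] by (force simp: S_def)
  then show ?thesis
    unfolding S_def[symmetric] by (metis card_atLeastAtMost diff_Suc_1)
qed simp

lemma sum_atLeastAtMost_split:
  fixes f :: "nat \<Rightarrow> 'a::comm_monoid_add"
  assumes "a \<le> Suc b" and "b \<le> c"
  shows "sum f {a..c} = sum f {a..b} + sum f {Suc b..c}"
  using sum.ub_add_nat[of a b f "c - b"] assms by simp

locale weighted_roots =
  fixes n :: nat and lam w mu :: "nat \<Rightarrow> real"
  assumes lam_sorted: "\<And>i j. 1 \<le> i \<Longrightarrow> i \<le> j \<Longrightarrow> j \<le> n \<Longrightarrow> lam j \<le> lam i"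
    and w_nonneg: "\<And>i. 1 \<le> i \<Longrightarrow> i \<le> n \<Longrightarrow> w i \<ge> 0"
    and w_sum: "(\<Sum>i=1..n. w i) = 1"
    and mu_sorted: "\<And>i j. 1 \<le> i \<Longrightarrow> i \<le> j \<Longrightarrow> j \<le> n - 1 \<Longrightarrow> mu j \<le> mu i"
    and mu_roots: "wpoly n lam w = (\<Prod>j=1..n-1. [:- mu j, 1:])"
begin

definition tail_lumped :: "nat \<Rightarrow> nat \<Rightarrow> real" where
  "tail_lumped r i = (if i = r + 1 then (\<Sum>k=r+1..n. w k) else w i)"

lemma proots_weighted_poly: "proots (weighted_poly {1..n} lam w) = image_mset mu (mset_set {1..n - 1})"
  using mu_roots proots_prod_linear[of "{1..n - 1}" mu] by (simp add: wpoly_def weighted_poly_def)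

lemma count_above_mu_segment:
  assumes "1 \<le> l" and "r \<le> n - 1"
  shows "count_above (image_mset mu (mset_set {l..r})) t
    = card {l..min r (count_above (proots (weighted_poly {1..n} lam w)) t)}"
proof -
  have "count_above (proots (weighted_poly {1..n} lam w)) t = card {j\<in>{1..n - 1}. t < mu j}"
    unfolding count_above_def proots_weighted_poly by (simp add: filter_mset_image_mset)
  then have "{j\<in>{1..n - 1}. t < mu j} = {1..count_above (proots (weighted_poly {1..n} lam w)) t}"
    using superlevel_set_antitone[of "n - 1" mu t, OF mu_sorted] by simp
  moreover have "{j\<in>{l..r}. t < mu j} = {l..r} \<inter> {j\<in>{1..n - 1}. t < mu j}" using assms by auto
  ultimately show ?thesis
    using assms by (simp add: count_above_def filter_mset_image_mset)
qed

lemma partial_fraction_sum_le_tail_lumped: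
  assumes "1 \<le> l" and "l \<le> r" and "r < n" and "lam (r + 1) < t" and "t < lam l"
  shows "partial_fraction_sum {1..n} lam w t \<le> partial_fraction_sum {l..r+1} lam (tail_lumped r) t"
proof -
  let ?f = "\<lambda>i. w i / (t - lam i)"
  have "partial_fraction_sum {1..n} lam w t = sum ?f {1..l - 1} + sum ?f {l..r} + sum ?f {r + 1..n}"
    unfolding partial_fraction_sum_def
    using sum_atLeastAtMost_split[of 1 r n ?f] sum_atLeastAtMost_split[of 1 "l - 1" r ?f] assms(1-3)
    by simp
  moreover have "partial_fraction_sum {l..r+1} lam (tail_lumped r) t
      = sum ?f {l..r} + (\<Sum>k=r+1..n. w k) / (t - lam (r + 1))"
  proof -
    have "{l..r+1} = insert (r + 1) {l..r}" using assms(2) by auto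
    then show ?thesis by (simp add: partial_fraction_sum_def tail_lumped_def)
  qed
  moreover have "sum ?f {1..l - 1} \<le> 0"
  proof (rule sum_nonpos)
    fix i assume "i \<in> {1..l - 1}"
    then have "1 \<le> i" "i \<le> l" "i \<le> n" using assms by auto
    then have "t - lam i < 0" and "0 \<le> w i"
      using lam_sorted[of i l] w_nonneg[of i] assms by auto
    then show "?f i \<le> 0" by (simp add: divide_nonneg_neg)
  qed
  moreover have "sum ?f {r + 1..n} \<le> (\<Sum>k=r+1..n. w k) / (t - lam (r + 1))"
    unfolding sum_divide_distrib
  proof (rule sum_mono)
    fix k assume "k \<in> {r + 1..n}"
    then have "t - lam (r + 1) \<le> t - lam k" and "0 \<le> w k"
      using lam_sorted[of "r + 1" k] w_nonneg[of k] by auto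
    then show "?f k \<le> w k / (t - lam (r + 1))"
      using assms(4) by (intro divide_left_mono) auto
  qed
  ultimately show ?thesis by linarith
qed

lemma tail_lumped_weights:
  assumes "1 \<le> l" and "l \<le> r" and "r < n"
  shows "\<forall>i\<in>{l..r+1}. 0 \<le> tail_lumped r i" and "(\<Sum>i=l..r+1. tail_lumped r i) = (\<Sum>i=l..n. w i)"
proof -
  show "\<forall>i\<in>{l..r+1}. 0 \<le> tail_lumped r i"
    using assms w_nonneg by (auto simp: tail_lumped_def intro: sum_nonneg)
  have "{l..r+1} = insert (r + 1) {l..r}" using assms(2) by auto
  then show "(\<Sum>i=l..r+1. tail_lumped r i) = (\<Sum>i=l..n. w i)"
    using sum_atLeastAtMost_split[of l r n w] assms by (simp add: tail_lumped_def)
qed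

lemma count_above_mu_segment_le_tail_lumped:
  assumes "1 \<le> l" and "l \<le> r" and "r < n" and "0 < (\<Sum>i=l..n. w i)" and "t \<notin> lam ` {1..n}"
  shows "count_above (image_mset mu (mset_set {l..r})) t
    \<le> count_above (proots (weighted_poly {l..r+1} lam (tail_lumped r))) t"
proof -
  let ?p = "weighted_poly {1..n} lam w" and ?G = "weighted_poly {l..r+1} lam (tail_lumped r)"
  define K where "K = card {i\<in>{1..n}. t < lam i}"
  have above: "{i\<in>{1..n}. t < lam i} = {1..K}"
    unfolding K_def by (rule superlevel_set_antitone[OF lam_sorted])
  have cp: "count_above (proots ?p) t = K - (if partial_fraction_sum {1..n} lam w t \<le> 0 then 1 else 0)"
    using count_above_weighted_poly[of "{1..n}" w t lam] w_nonneg w_sum assms(5) by (simp add: K_def)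
  have "{i\<in>{l..r+1}. t < lam i} = {l..r+1} \<inter> {i\<in>{1..n}. t < lam i}" using assms(1,3) by auto
  then have "{i\<in>{l..r+1}. t < lam i} = {l..min (r+1) K}" using above assms(1) by auto
  moreover have "0 < (\<Sum>i=l..r+1. tail_lumped r i)"
    using tail_lumped_weights(2)[OF assms(1-3)] assms(4) by simp
  moreover have "t \<notin> lam ` {l..r+1}" using assms(1,3,5) by auto
  ultimately have cG: "count_above (proots ?G) t
      = card {l..min (r+1) K} - (if partial_fraction_sum {l..r+1} lam (tail_lumped r) t \<le> 0 then 1 else 0)"
    using count_above_weighted_poly[OF finite_atLeastAtMost tail_lumped_weights(1)[OF assms(1-3)]] by simp
  have mu: "count_above (image_mset mu (mset_set {l..r})) t = card {l..min r (count_above (proots ?p) t)}"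
    using count_above_mu_segment assms by simp
  consider "K < l" | "l \<le> K" "K \<le> r" | "r < K" by linarith
  then show ?thesis
  proof cases
    case 2
    then have "l \<in> {i\<in>{1..n}. t < lam i}" and "r + 1 \<notin> {i\<in>{1..n}. t < lam i}"
      using above assms(1) by auto
    then have "t < lam l" and "lam (r + 1) < t"
      using assms(3,5) by (auto simp: not_less order.order_iff_strict image_iff)
    then have "partial_fraction_sum {1..n} lam w t \<le> partial_fraction_sum {l..r+1} lam (tail_lumped r) t"
      using assms(1-3) by (rule_tac partial_fraction_sum_le_tail_lumped) auto
    then show ?thesis unfolding mu cp cG using 2 assms(1) by (auto simp: min_def)
  qed (unfold mu cp cG, auto simp: min_def)
qed

lemma sum_proots_tail_lumped:
  assumes "1 \<le> l" and "l \<le> r" and "r < n" and "0 < (\<Sum>i=l..n. w i)"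
  shows "sum_mset (proots (weighted_poly {l..r+1} lam (tail_lumped r)))
    = (\<Sum>j=l..r. lam j) - (\<Sum>j=l..r. w j * (lam j - lam (r + 1))) / (\<Sum>i=l..n. w i)"
proof -
  let ?U = "\<Sum>i=l..n. w i" and ?T = "\<Sum>k=r+1..n. w k"
  have I: "{l..r+1} = insert (r + 1) {l..r}" using assms(2) by auto
  have "sum_mset (proots (weighted_poly {l..r+1} lam (tail_lumped r)))
      = (\<Sum>j\<in>{l..r+1}. lam j) - (\<Sum>i\<in>{l..r+1}. tail_lumped r i * lam i) / ?U"
    using sum_proots_weighted_poly[OF finite_atLeastAtMost _ tail_lumped_weights(1)[OF assms(1-3)]]
      tail_lumped_weights(2)[OF assms(1-3)] assms by simp
  also have "\<dots> = (\<Sum>j=l..r. lam j) + lam (r + 1) - ((\<Sum>i=l..r. w i * lam i) + ?T * lam (r + 1)) / ?U"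
    unfolding I by (simp add: tail_lumped_def)
  also have "?U = (\<Sum>i=l..r. w i) + ?T"
    using sum_atLeastAtMost_split[of l r n w] assms by simp
  also have "(\<Sum>j=l..r. w j * (lam j - lam (r + 1))) = (\<Sum>i=l..r. w i * lam i) - (\<Sum>i=l..r. w i) * lam (r + 1)"
    by (simp add: right_diff_distrib sum_subtractf sum_distrib_right)
  ultimately show ?thesis
    using assms(4) sum_atLeastAtMost_split[of l r n w] assms(1-3) by (simp add: field_simps)
qed

lemma sum_mu_segment_le:
  assumes "1 \<le> l" and "l \<le> r" and "r < n" and "(\<Sum>i=l..n. w i) \<noteq> 0"
  shows "(\<Sum>j=l..r. mu j) \<le> (\<Sum>j=l..r. lam j) - (\<Sum>j=l..r. w j * (lam j - lam (r + 1)))"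
proof -
  let ?G = "weighted_poly {l..r+1} lam (tail_lumped r)"
  let ?U = "\<Sum>i=l..n. w i" and ?s = "\<Sum>j=l..r. w j * (lam j - lam (r + 1))"
  have "0 \<le> ?U" using w_nonneg assms(1) by (intro sum_nonneg) auto
  then have U: "0 < ?U" using assms(4) by simp
  have "?U \<le> (\<Sum>i=1..n. w i)" using w_nonneg assms(1) by (intro sum_mono2) auto
  then have "?U \<le> 1" using w_sum by simp
  have "0 \<le> ?s" using w_nonneg lam_sorted assms by (intro sum_nonneg mult_nonneg_nonneg) auto
  have "(\<Sum>j=l..r. mu j) = sum_mset (image_mset mu (mset_set {l..r}))"
    by (simp add: sum_unfold_sum_mset)
  also have "\<dots> \<le> sum_mset (proots ?G)"
  proof (rule sum_mset_le_if_count_above_le)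
    have "0 < (\<Sum>i=l..r+1. tail_lumped r i)"
      using tail_lumped_weights(2)[OF assms(1-3)] U by simp
    then show "size (image_mset mu (mset_set {l..r})) = size (proots ?G)"
      using size_proots_weighted_poly[OF finite_atLeastAtMost tail_lumped_weights(1)[OF assms(1-3)]]
      by simp
    show "count_above (image_mset mu (mset_set {l..r})) t \<le> count_above (proots ?G) t" for t
    proof (rule count_above_le_if_le_off_finite)
      show "finite (lam ` {1..n})" by simp
      show "count_above (image_mset mu (mset_set {l..r})) s \<le> count_above (proots ?G) s"
        if "s \<notin> lam ` {1..n}" for s
        using count_above_mu_segment_le_tail_lumped[OF assms(1-3) U that] .
    qed
  qed
  also have "\<dots> = (\<Sum>j=l..r. lam j) - ?s / ?U"
    using sum_proots_tail_lumped assms U by simp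
  also have "\<dots> \<le> (\<Sum>j=l..r. lam j) - ?s"
    using U \<open>?U \<le> 1\<close> \<open>0 \<le> ?s\<close> by (simp add: le_divide_eq mult_left_le)
  finally show ?thesis .
qed

lemma reflect: "weighted_roots n (\<lambda>i. - lam (n + 1 - i)) (\<lambda>i. w (n + 1 - i)) (\<lambda>j. - mu (n - j))"
proof
  have "1 \<le> n" using w_sum by (cases n) auto
  show "- lam (n + 1 - j) \<le> - lam (n + 1 - i)" if "1 \<le> i" "i \<le> j" "j \<le> n" for i j
    using lam_sorted[of "n + 1 - j" "n + 1 - i"] that by simp
  show "0 \<le> w (n + 1 - i)" if "1 \<le> i" "i \<le> n" for i
    using w_nonneg[of "n + 1 - i"] that by simp
  show "(\<Sum>i=1..n. w (n + 1 - i)) = 1"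
    using sum_atLeastAtMost_reflect[of 1 n "n + 1" w] \<open>1 \<le> n\<close> w_sum by simp
  show "- mu (n - j) \<le> - mu (n - i)" if "1 \<le> i" "i \<le> j" "j \<le> n - 1" for i j
    using mu_sorted[of "n - j" "n - i"] that by simp
  let ?h = "\<lambda>i. n + 1 - i" and ?s = "(-1 :: real) ^ (n - 1)"
  have "bij_betw ?h {1..n} {1..n}"
    by (intro bij_betw_byWitness[where f'="?h"]) auto
  then have "wpoly n (\<lambda>i. - lam (n + 1 - i)) (\<lambda>i. w (n + 1 - i)) = weighted_poly {1..n} (\<lambda>i. - lam i) w"
    using weighted_poly_reindex[of ?h "{1..n}" "{1..n}" "\<lambda>i. - lam i" w]
    by (simp add: wpoly_def weighted_poly_def comp_def)
  also have "\<dots> = smult ?s (pcompose (\<Prod>j=1..n-1. [:- mu j, 1:]) [:0, -1:])"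
    using weighted_poly_reflect[of "{1..n}" lam w] mu_roots by (simp add: wpoly_def weighted_poly_def)
  also have "\<dots> = (\<Prod>j=1..n-1. [:mu j, 1:])"
    by (simp add: pcompose_prod_linear_reflect flip: power_mult_distrib)
  also have "\<dots> = (\<Prod>j=1..n-1. [:- (- mu (n - j)), 1:])"
    by (rule prod.reindex_bij_witness[where i="\<lambda>j. n - j" and j="\<lambda>j. n - j"]) auto
  finally show "wpoly n (\<lambda>i. - lam (n + 1 - i)) (\<lambda>i. w (n + 1 - i)) = (\<Prod>j=1..n-1. [:- (- mu (n - j)), 1:])" .
qed

lemma sum_mu_segment_ge:
  assumes "1 \<le> l" and "l \<le> r" and "r < n" and "(\<Sum>i=1..r+1. w i) \<noteq> 0"
  shows "(\<Sum>j=l..r. lam (j + 1)) + (\<Sum>j=l..r. w (j + 1) * (lam l - lam (j + 1))) \<le> (\<Sum>j=l..r. mu j)"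
proof -
  interpret reflected: weighted_roots n "\<lambda>i. - lam (n + 1 - i)" "\<lambda>i. w (n + 1 - i)" "\<lambda>j. - mu (n - j)"
    by (rule reflect)
  have "(\<Sum>i=n-r..n. w (n + 1 - i)) = (\<Sum>i=1..r+1. w i)"
    using sum_atLeastAtMost_reflect[of 1 "r + 1" "n + 1" w] assms by simp
  then have "(\<Sum>j=n-r..n-l. - mu (n - j))
      \<le> (\<Sum>j=n-r..n-l. - lam (n + 1 - j)) - (\<Sum>j=n-r..n-l. w (n + 1 - j) * (lam l - lam (n + 1 - j)))"
    using reflected.sum_mu_segment_le[of "n - r" "n - l"] assms by simp
  moreover have "(\<Sum>j=n-r..n-l. - mu (n - j)) = - (\<Sum>j=l..r. mu j)"
    using sum_atLeastAtMost_reflect[of l r n "\<lambda>k. - mu k"] assms by (simp add: sum_negf)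
  moreover have "(\<Sum>j=n-r..n-l. - lam (n + 1 - j)) = - (\<Sum>j=l..r. lam (j + 1))"
    using sum_atLeastAtMost_reflect[of "l + 1" "r + 1" "n + 1" "\<lambda>k. - lam k"] assms
      sum.shift_bounds_cl_Suc_ivl[of lam l r] by (simp add: sum_negf)
  moreover have "(\<Sum>j=n-r..n-l. w (n + 1 - j) * (lam l - lam (n + 1 - j)))
      = (\<Sum>j=l..r. w (j + 1) * (lam l - lam (j + 1)))"
    using sum_atLeastAtMost_reflect[of "l + 1" "r + 1" "n + 1" "\<lambda>k. w k * (lam l - lam k)"] assms
      sum.shift_bounds_cl_Suc_ivl[of "\<lambda>k. w k * (lam l - lam k)" l r] by simp
  ultimately show ?thesis by linarith
qed

end

theorem corollary2p3:
  fixes n :: nat and lam w mu :: "nat \<Rightarrow> real" and l r :: nat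
  assumes n2: "n \<ge> 2"
    and lam_sorted: "\<And>i j. 1 \<le> i \<Longrightarrow> i \<le> j \<Longrightarrow> j \<le> n \<Longrightarrow> lam j \<le> lam i"
    and w_nonneg: "\<And>i. 1 \<le> i \<Longrightarrow> i \<le> n \<Longrightarrow> w i \<ge> 0"
    and w_sum: "(\<Sum>i=1..n. w i) = 1"
    and mu_sorted: "\<And>i j. 1 \<le> i \<Longrightarrow> i \<le> j \<Longrightarrow> j \<le> n - 1 \<Longrightarrow> mu j \<le> mu i"
    and mu_roots: "wpoly n lam w = (\<Prod>j=1..n-1. [:- mu j, 1:])"
    and lr: "1 \<le> l" "l \<le> r" "r \<le> n - 1"
    and U_nz: "(\<Sum>i=l..n. w i) \<noteq> 0"
    and L_nz: "(\<Sum>i=1..r+1. w i) \<noteq> 0"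
  shows "(\<Sum>j=l..r. lam (j+1)) + (\<Sum>j=l..r. w (j+1) * (lam l - lam (j+1))) \<le> (\<Sum>j=l..r. mu j)
       \<and> (\<Sum>j=l..r. mu j) \<le> (\<Sum>j=l..r. lam j) - (\<Sum>j=l..r. w j * (lam j - lam (r+1)))"
proof -
  interpret weighted_roots n lam w mu
    using lam_sorted w_nonneg w_sum mu_sorted mu_roots by unfold_locales
  have "r < n" using lr by simp
  then show ?thesis
    using sum_mu_segment_ge[OF lr(1,2) _ L_nz] sum_mu_segment_le[OF lr(1,2) _ U_nz] by simp
qed

end
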